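(* Let $n,r,k$ be positive integers with $n\ge 2(k+r)$, let $D$ be a minimum-cardinality $k$-dominating set of the Kneser graph $K(n,r)$, and let $\tilde u\subseteq [n]$ with $|\tilde u|=r-1$. Then there exists $x\in[n]\setminus\tilde u$ such that $\tilde u\cup\{x\}\notin D$.
   Context: For integers $n\ge 2r$, the Kneser graph $K(n,r)$ has as vertices the $r$-element subsets of $[n]=\{1,\dots,n\}$, two vertices being adjacent iff they are disjoint. For a graph $G$ and positive integer $k$, a set $D\subseteq V(G)$ is $k$-dominating if every vertex $u\in V(G)\setminus D$ has at least $k$ neighbors in $D$. *)

theory Defs
  imports Main
begin

definition kneser_vertices :: "nat \<Rightarrow> nat \<Rightarrow> nat set set" where
  "kneser_vertices n r = {A. A \<subseteq> {1..n} \<and> card A = r}"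

definition kneser_adj :: "nat set \<Rightarrow> nat set \<Rightarrow> bool" where
  "kneser_adj A B \<longleftrightarrow> A \<inter> B = {}"

definition kneser_k_dominating :: "nat \<Rightarrow> nat \<Rightarrow> nat \<Rightarrow> nat set set \<Rightarrow> bool" where
  "kneser_k_dominating n r k D \<longleftrightarrow>
     D \<subseteq> kneser_vertices n r \<and>
     (\<forall>u \<in> kneser_vertices n r - D. card {v \<in> D. kneser_adj u v} \<ge> k)"

definition kneser_min_k_dominating :: "nat \<Rightarrow> nat \<Rightarrow> nat \<Rightarrow> nat set set \<Rightarrow> bool" where
  "kneser_min_k_dominating n r k D \<longleftrightarrow>
     kneser_k_dominating n r k D \<and>
     (\<forall>D'. kneser_k_dominating n r k D' \<longrightarrow> card D \<le> card D')"

end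

theory Submission
  imports Defs
begin

text \<open>
  Suppose every vertex \<open>u \<union> {x}\<close> of the star of \<open>u\<close> lies in \<open>D\<close>. Fix a set \<open>Y\<close> of \<open>k + 1\<close>
  points outside \<open>u\<close>, an \<open>(r - 1)\<close>-set \<open>B\<close> avoiding \<open>u \<union> Y\<close> and \<open>k\<close> further points \<open>E\<close>.
  Replacing the \<open>k + 1\<close> vertices \<open>u \<union> {y}\<close>, \<open>y \<in> Y\<close>, by the \<open>k\<close> vertices \<open>B \<union> {c}\<close>,
  \<open>c \<in> E\<close>, keeps \<open>D\<close> \<open>k\<close>-dominating: each removed vertex is disjoint from all new ones; a
  vertex disjoint from \<open>u\<close> still sees at least \<open>n - 2r - k \<ge> k\<close> remaining star vertices; and
  a vertex meeting \<open>u\<close> was never adjacent to a removed vertex. This contradicts minimality.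
\<close>

lemma finite_kneser_vertices: "finite (kneser_vertices n r)"
  by (rule finite_subset[of _ "Pow {1..n}"]) (auto simp: kneser_vertices_def)

lemma insert_in_kneser_vertices:
  assumes "B \<subseteq> {1..n}" "card B = r - 1" "0 < r" "c \<in> {1..n} - B"
  shows "insert c B \<in> kneser_vertices n r"
  using assms finite_subset[OF assms(1)] by (auto simp: kneser_vertices_def)

lemma inj_on_insert_outside: "inj_on (\<lambda>x. insert x u) (- u)"
  by (auto simp: inj_on_def)

lemma card_neighbours_in_star:
  assumes "finite C" "C \<inter> u = {}" "finite v" "v \<inter> u = {}" "k + card v \<le> card C"
  shows "k \<le> card {w \<in> (\<lambda>x. insert x u) ` C. kneser_adj v w}"
proof -
  have "k \<le> card C - card v"
    using assms(5) by simp
  also have "\<dots> \<le> card (C - v)"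
    by (rule diff_card_le_card_Diff[OF \<open>finite v\<close>])
  also have "\<dots> = card ((\<lambda>x. insert x u) ` (C - v))"
    by (rule card_image[symmetric], rule inj_on_subset[OF inj_on_insert_outside]) (use assms(2) in auto)
  also have "\<dots> \<le> card {w \<in> (\<lambda>x. insert x u) ` C. kneser_adj v w}"
    by (rule card_mono) (use assms(1,4) in \<open>auto simp: kneser_adj_def\<close>)
  finally show ?thesis .
qed

lemma kneser_k_dominating_swap:
  assumes dom: "kneser_k_dominating n r k D" and "0 < r"
    and star: "\<forall>x \<in> {1..n} - u. insert x u \<in> D"
    and Y: "Y \<subseteq> {1..n} - u" and large: "k + r \<le> card ({1..n} - u - Y)"
    and B: "B \<subseteq> {1..n} - u - Y" "card B = r - 1"
    and E: "E \<subseteq> {1..n} - u - Y - B" "card E = k"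
  shows "kneser_k_dominating n r k ((D - (\<lambda>y. insert y u) ` Y) \<union> (\<lambda>c. insert c B) ` E)"
    (is "kneser_k_dominating n r k ?D'")
  unfolding kneser_k_dominating_def
proof (intro conjI ballI)
  have "(\<lambda>c. insert c B) ` E \<subseteq> kneser_vertices n r"
    using B E \<open>0 < r\<close> by (auto intro!: insert_in_kneser_vertices)
  then show "?D' \<subseteq> kneser_vertices n r"
    using dom by (auto simp: kneser_k_dominating_def)
  have "finite ?D'"
    using dom finite_subset[OF _ finite_kneser_vertices] finite_subset[OF E(1)]
    by (auto simp: kneser_k_dominating_def)
  fix v
  assume v: "v \<in> kneser_vertices n r - ?D'"
  have finite_nbhd: "finite {w \<in> ?D'. kneser_adj v w}"
    using \<open>finite ?D'\<close> by (rule finite_subset[rotated]) blast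
  consider (removed) y where "y \<in> Y" "v = insert y u"
    | (meets_u) "v \<notin> D" "v \<inter> u \<noteq> {}"
    | (avoids_u) "v \<notin> D" "v \<inter> u = {}"
    using v by auto
  then show "k \<le> card {w \<in> ?D'. kneser_adj v w}"
  proof cases
    case removed
    have "k = card ((\<lambda>c. insert c B) ` E)"
      using E by (subst card_image) (auto simp: inj_on_def)
    also have "\<dots> \<le> card {w \<in> ?D'. kneser_adj v w}"
      using removed Y B E by (intro card_mono[OF finite_nbhd]) (auto simp: kneser_adj_def)
    finally show ?thesis .
  next
    case meets_u
    have "k \<le> card {w \<in> D. kneser_adj v w}"
      using dom v meets_u unfolding kneser_k_dominating_def by blast
    also have "\<dots> \<le> card {w \<in> ?D'. kneser_adj v w}"
    proof (rule card_mono[OF finite_nbhd subsetI])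
      fix w
      assume w: "w \<in> {w \<in> D. kneser_adj v w}"
      then have "\<not> u \<subseteq> w"
        using meets_u unfolding kneser_adj_def by blast
      then show "w \<in> {w \<in> ?D'. kneser_adj v w}"
        using w by auto
    qed
    finally show ?thesis .
  next
    case avoids_u
    let ?C = "{1..n} - u - Y"
    have "finite v" "card v = r"
      using v finite_subset[of v "{1..n}"] by (auto simp: kneser_vertices_def)
    then have "k \<le> card {w \<in> (\<lambda>x. insert x u) ` ?C. kneser_adj v w}"
      using avoids_u large by (intro card_neighbours_in_star) auto
    also have "\<dots> \<le> card {w \<in> ?D'. kneser_adj v w}"
    proof (rule card_mono[OF finite_nbhd subsetI])
      fix w
      assume "w \<in> {w \<in> (\<lambda>x. insert x u) ` ?C. kneser_adj v w}"
      then obtain x where x: "x \<in> ?C" "w = insert x u" "kneser_adj v w"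
        by blast
      have "w \<notin> (\<lambda>y. insert y u) ` Y"
      proof
        assume "w \<in> (\<lambda>y. insert y u) ` Y"
        then obtain y where "y \<in> Y" "insert x u = insert y u"
          using x(2) by blast
        then show False
          using x(1) Y inj_onD[OF inj_on_insert_outside, of x u y] by auto
      qed
      then show "w \<in> {w \<in> ?D'. kneser_adj v w}"
        using star x by auto
    qed
    finally show ?thesis .
  qed
qed

lemma kneser_k_dominating_not_minimal_if_star_contained:
  assumes dom: "kneser_k_dominating n r k D" and "0 < r" and n: "2 * (k + r) \<le> n"
    and u: "u \<subseteq> {1..n}" "card u = r - 1"
    and star: "\<forall>x \<in> {1..n} - u. insert x u \<in> D"
  obtains D' where "kneser_k_dominating n r k D'" "card D' < card D"
proof -
  have "finite u"
    using u(1) finite_subset by blast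
  have card_S: "card ({1..n} - u) = n - (r - 1)"
    using u \<open>finite u\<close> by (simp add: card_Diff_subset)
  have "k + 1 \<le> card ({1..n} - u)"
    unfolding card_S using n \<open>0 < r\<close> by simp
  then obtain Y where Y: "Y \<subseteq> {1..n} - u" "card Y = k + 1"
    by (meson obtain_subset_with_card_n)
  let ?C = "{1..n} - u - Y"
  have card_C: "card ?C = n - (r - 1) - (k + 1)"
    using Y card_S finite_subset[OF Y(1)] by (simp add: card_Diff_subset)
  have "r - 1 \<le> card ?C"
    unfolding card_C using n \<open>0 < r\<close> by simp
  then obtain B where B: "B \<subseteq> ?C" "card B = r - 1"
    by (meson obtain_subset_with_card_n)
  have card_C_B: "card (?C - B) = n - (r - 1) - (k + 1) - (r - 1)"
    using B card_C finite_subset[OF B(1)] by (simp add: card_Diff_subset)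
  have "k \<le> card (?C - B)"
    unfolding card_C_B using n \<open>0 < r\<close> by simp
  then obtain E where E: "E \<subseteq> ?C - B" "card E = k"
    by (meson obtain_subset_with_card_n)
  let ?D' = "(D - (\<lambda>y. insert y u) ` Y) \<union> (\<lambda>c. insert c B) ` E"
  have "kneser_k_dominating n r k ?D'"
    using dom \<open>0 < r\<close> star Y(1) B E card_C n by (intro kneser_k_dominating_swap) auto
  moreover have "card ?D' < card D"
  proof -
    have "finite D"
      using dom finite_kneser_vertices finite_subset unfolding kneser_k_dominating_def by blast
    have "Y \<subseteq> - u"
      using Y(1) by blast
    then have removed: "(\<lambda>y. insert y u) ` Y \<subseteq> D" "card ((\<lambda>y. insert y u) ` Y) = k + 1"
      using star Y card_image[OF inj_on_subset[OF inj_on_insert_outside \<open>Y \<subseteq> - u\<close>]] by auto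
    have "card ?D' \<le> card (D - (\<lambda>y. insert y u) ` Y) + card ((\<lambda>c. insert c B) ` E)"
      by (rule card_Un_le)
    also have "\<dots> \<le> (card D - (k + 1)) + k"
      using removed \<open>finite D\<close> E(2) card_image_le[OF finite_subset[OF E(1)]]
      by (simp add: card_Diff_subset finite_subset)
    also have "\<dots> < card D"
      using removed card_mono[OF \<open>finite D\<close> removed(1)] by simp
    finally show ?thesis .
  qed
  ultimately show ?thesis
    using that by blast
qed

theorem lemma2p2:
  fixes n r k :: nat and D :: "nat set set" and u :: "nat set"
  assumes "0 < n" "0 < r" "0 < k"
    and "n \<ge> 2 * (k + r)"
    and "kneser_min_k_dominating n r k D"
    and "u \<subseteq> {1..n}" "card u = r - 1"
  shows "\<exists>x \<in> {1..n} - u. insert x u \<notin> D"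
proof (rule ccontr)
  assume "\<not> ?thesis"
  then have "\<forall>x \<in> {1..n} - u. insert x u \<in> D"
    by blast
  moreover have "kneser_k_dominating n r k D"
    using assms(5) by (simp add: kneser_min_k_dominating_def)
  ultimately obtain D' where "kneser_k_dominating n r k D'" "card D' < card D"
    using kneser_k_dominating_not_minimal_if_star_contained assms(2,4,6,7) by blast
  then show False
    using assms(5) by (auto simp: kneser_min_k_dominating_def not_le[symmetric])
qed

end
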